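(* Let $H_0,H_1$ be complex Hilbert spaces, $G$ a densely defined closed operator from $H_0$ into $H_1$ and $D$ a densely defined closed operator from $H_1$ into $H_0$ with $-G^*\subset D$. Define $\Phi\colon\mathrm{BD}(D)\to\mathrm{BD}(G)'$ by $(\Phi(q))(u)=(Dq,u)_{H_0}+(q,Gu)_{H_1}$. Then $\Phi$ is unitary.
   Context: Put $\mathring D=-G^*$, $\mathring G=-D^*$. Domains carry graph inner products, e.g. $(u,v)_{\mathrm{dom}(G)}=(u,v)_{H_0}+(Gu,Gv)_{H_1}$. $\mathrm{BD}(G)$ is the orthogonal complement of $\mathrm{dom}(\mathring G)$ in $\mathrm{dom}(G)$ and $\mathrm{BD}(D)$ the orthogonal complement of $\mathrm{dom}(\mathring D)$ in $\mathrm{dom}(D)$, both with the induced inner products. $\mathrm{BD}(G)'$ denotes the Hilbert space of continuous antilinear functionals on $\mathrm{BD}(G)$ with the dual norm. *)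

theory Defs
  imports "HOL-Analysis.Analysis"
begin

definition cnorm :: "('a \<Rightarrow> 'a \<Rightarrow> complex) \<Rightarrow> 'a \<Rightarrow> real" where
  "cnorm ip x = sqrt (Re (ip x x))"

definition complex_inner_space ::
  "(complex \<Rightarrow> 'a::ab_group_add \<Rightarrow> 'a) \<Rightarrow> ('a \<Rightarrow> 'a \<Rightarrow> complex) \<Rightarrow> bool" where
  "complex_inner_space sc ip \<longleftrightarrow>
     vector_space sc \<and>
     (\<forall>x y z. ip (x + y) z = ip x z + ip y z) \<and>
     (\<forall>a x y. ip (sc a x) y = a * ip x y) \<and>
     (\<forall>x y. ip y x = cnj (ip x y)) \<and>
     (\<forall>x. 0 \<le> Re (ip x x)) \<and>
     (\<forall>x. ip x x = 0 \<longrightarrow> x = 0)"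

definition complex_hilbert_space ::
  "(complex \<Rightarrow> 'a::ab_group_add \<Rightarrow> 'a) \<Rightarrow> ('a \<Rightarrow> 'a \<Rightarrow> complex) \<Rightarrow> bool" where
  "complex_hilbert_space sc ip \<longleftrightarrow>
     complex_inner_space sc ip \<and>
     (\<forall>X::nat \<Rightarrow> 'a.
        (\<forall>e>0. \<exists>N. \<forall>m\<ge>N. \<forall>n\<ge>N. cnorm ip (X m - X n) < e) \<longrightarrow>
        (\<exists>L. (\<lambda>n. cnorm ip (X n - L)) \<longlonglongrightarrow> 0))"

definition densely_defined_op ::
  "(complex \<Rightarrow> 'a::ab_group_add \<Rightarrow> 'a) \<Rightarrow> ('a \<Rightarrow> 'a \<Rightarrow> complex) \<Rightarrow>
   (complex \<Rightarrow> 'b::ab_group_add \<Rightarrow> 'b) \<Rightarrow> 'a set \<Rightarrow> ('a \<Rightarrow> 'b) \<Rightarrow> bool" where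
  "densely_defined_op sc0 ip0 sc1 dm T \<longleftrightarrow>
     module.subspace sc0 dm \<and>
     (\<forall>x\<in>dm. \<forall>y\<in>dm. T (x + y) = T x + T y) \<and>
     (\<forall>a. \<forall>x\<in>dm. T (sc0 a x) = sc1 a (T x)) \<and>
     (\<forall>x. \<forall>e>0. \<exists>y\<in>dm. cnorm ip0 (x - y) < e)"

definition closed_op ::
  "('a::ab_group_add \<Rightarrow> 'a \<Rightarrow> complex) \<Rightarrow> ('b::ab_group_add \<Rightarrow> 'b \<Rightarrow> complex) \<Rightarrow>
   'a set \<Rightarrow> ('a \<Rightarrow> 'b) \<Rightarrow> bool" where
  "closed_op ip0 ip1 dm T \<longleftrightarrow>
     (\<forall>X x y. (\<forall>n. X n \<in> dm) \<and> (\<lambda>n. cnorm ip0 (X n - x)) \<longlonglongrightarrow> 0 \<and>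
              (\<lambda>n. cnorm ip1 (T (X n) - y)) \<longlonglongrightarrow> 0 \<longrightarrow> x \<in> dm \<and> T x = y)"

definition adj_dom ::
  "('a \<Rightarrow> 'a \<Rightarrow> complex) \<Rightarrow> ('b \<Rightarrow> 'b \<Rightarrow> complex) \<Rightarrow> 'a set \<Rightarrow> ('a \<Rightarrow> 'b) \<Rightarrow> 'b set" where
  "adj_dom ip0 ip1 dm T = {v. \<exists>w. \<forall>u\<in>dm. ip1 (T u) v = ip0 u w}"

definition adj ::
  "('a \<Rightarrow> 'a \<Rightarrow> complex) \<Rightarrow> ('b \<Rightarrow> 'b \<Rightarrow> complex) \<Rightarrow> 'a set \<Rightarrow> ('a \<Rightarrow> 'b) \<Rightarrow> 'b \<Rightarrow> 'a" where
  "adj ip0 ip1 dm T v = (THE w. \<forall>u\<in>dm. ip1 (T u) v = ip0 u w)"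

definition graph_norm ::
  "('a \<Rightarrow> 'a \<Rightarrow> complex) \<Rightarrow> ('b \<Rightarrow> 'b \<Rightarrow> complex) \<Rightarrow> ('a \<Rightarrow> 'b) \<Rightarrow> 'a \<Rightarrow> real" where
  "graph_norm ip0 ip1 T u = sqrt (Re (ip0 u u + ip1 (T u) (T u)))"

text \<open>BD: orthogonal complement of the subspace domo (the domain of the minimal operator)
inside dm(T), with respect to the graph inner product.\<close>

definition BD ::
  "('a \<Rightarrow> 'a \<Rightarrow> complex) \<Rightarrow> ('b \<Rightarrow> 'b \<Rightarrow> complex) \<Rightarrow> 'a set \<Rightarrow> ('a \<Rightarrow> 'b) \<Rightarrow> 'a set \<Rightarrow> 'a set" where
  "BD ip0 ip1 dm T domo = {u \<in> dm. \<forall>v\<in>domo. ip0 u v + ip1 (T u) (T v) = 0}"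

text \<open>Continuous antilinear functionals on a subspace S with norm N (the dual S'),
and the dual norm.  Functionals are represented by functions, only their values on S matter.\<close>

definition antidual ::
  "'a set \<Rightarrow> (complex \<Rightarrow> 'a::ab_group_add \<Rightarrow> 'a) \<Rightarrow> ('a \<Rightarrow> real) \<Rightarrow> ('a \<Rightarrow> complex) set" where
  "antidual S sc N = {f.
     (\<forall>u\<in>S. \<forall>v\<in>S. f (u + v) = f u + f v) \<and>
     (\<forall>a. \<forall>u\<in>S. f (sc a u) = cnj a * f u) \<and>
     (\<exists>C. \<forall>u\<in>S. cmod (f u) \<le> C * N u)}"

definition dual_norm :: "'a set \<Rightarrow> ('a \<Rightarrow> real) \<Rightarrow> ('a \<Rightarrow> complex) \<Rightarrow> real" where
  "dual_norm S N f = Sup {cmod (f u) | u. u \<in> S \<and> N u \<le> 1}"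

end

theory Submission
  imports Defs
begin

(* Since G is closed, G** = G, so -G* \<subseteq> D forces -D* \<subseteq> G.  Both inclusions together
   show that D maps BD(D) into BD(G) with G (D q) = q, and G maps BD(G) back with D (G u) = u.
   Hence \<Phi>(q) is the graph inner product (D q, \<cdot>) on dom(G), and the graph norm of q in dom(D)
   equals that of D q in dom(G).  BD(G) is closed in the complete space dom(G) (its graph is an
   orthogonal complement inside the closed graph of G), so the Riesz representation theorem on
   BD(G) yields surjectivity, and the dual norm of (w, \<cdot>) is the norm of w. *)

lemma LIMSEQ_zero_dominated:
  fixes f :: "nat \<Rightarrow> 'a::real_normed_vector"
  assumes "\<And>n. norm (f n) \<le> g n" and "g \<longlonglongrightarrow> 0"
  shows "f \<longlonglongrightarrow> 0"
  using Lim_null_comparison[OF always_eventually[of "\<lambda>n. norm (f n) \<le> g n"]] assms by blast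

section \<open>Complex inner product spaces\<close>

locale complex_inner_product = vector_space sc
  for sc :: "complex \<Rightarrow> 'a::ab_group_add \<Rightarrow> 'a" +
  fixes ip :: "'a \<Rightarrow> 'a \<Rightarrow> complex"
  assumes ip_add_left: "ip (x + y) z = ip x z + ip y z"
    and ip_scale_left: "ip (sc a x) y = a * ip x y"
    and ip_conj_sym: "ip y x = cnj (ip x y)"
    and ip_self_nonneg: "0 \<le> Re (ip x x)"
    and ip_self_eq_0: "ip x x = 0 \<Longrightarrow> x = 0"
begin

lemma ip_add_right: "ip x (y + z) = ip x y + ip x z"
  by (metis ip_add_left ip_conj_sym complex_cnj_add)

lemma ip_scale_right: "ip x (sc a y) = cnj a * ip x y"
  by (metis ip_scale_left ip_conj_sym complex_cnj_mult)

lemma ip_zero_left [simp]: "ip 0 y = 0"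
  using ip_add_left[of 0 0 y] by simp

lemma ip_zero_right [simp]: "ip x 0 = 0"
  using ip_add_right[of x 0 0] by simp

lemma ip_minus_left: "ip (- x) y = - ip x y"
  using ip_scale_left[of "-1" x y] by simp

lemma ip_minus_right: "ip x (- y) = - ip x y"
  using ip_scale_right[of x "-1" y] by simp

lemma ip_diff_left: "ip (x - y) z = ip x z - ip y z"
  using ip_add_left[of x "- y" z] by (simp add: ip_minus_left)

lemma ip_diff_right: "ip x (y - z) = ip x y - ip x z"
  using ip_add_right[of x y "- z"] by (simp add: ip_minus_right)

lemma cnorm_nonneg: "0 \<le> cnorm ip x"
  using ip_self_nonneg by (simp add: cnorm_def)

lemma cnorm_power2: "(cnorm ip x)\<^sup>2 = Re (ip x x)"
  using ip_self_nonneg by (simp add: cnorm_def)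

lemma ip_self: "ip x x = of_real ((cnorm ip x)\<^sup>2)"
  unfolding cnorm_power2 by (metis Reals_cnj_iff ip_conj_sym of_real_Re)

lemma cnorm_eq_0_iff: "cnorm ip x = 0 \<longleftrightarrow> x = 0"
proof -
  have "cnorm ip x = 0 \<longleftrightarrow> ip x x = 0"
    by (metis ip_self of_real_eq_0_iff zero_eq_power2)
  then show ?thesis
    using ip_self_eq_0 by auto
qed

lemma cnorm_scale: "cnorm ip (sc a x) = cmod a * cnorm ip x"
proof -
  have "ip (sc a x) (sc a x) = of_real ((cmod a)\<^sup>2) * ip x x"
    by (simp add: ip_scale_left ip_scale_right complex_mult_cnj cmod_power2 mult.commute
        del: of_real_power)
  then show ?thesis
    by (simp add: cnorm_def real_sqrt_mult)
qed

lemma cnorm_minus_commute: "cnorm ip (x - y) = cnorm ip (y - x)"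
  using cnorm_scale[of "-1" "x - y"] by simp

lemma cnorm_diff_projection:
  assumes "y \<noteq> 0"
  shows "(cnorm ip (x - sc (ip x y / ip y y) y))\<^sup>2
           = (cnorm ip x)\<^sup>2 - (cmod (ip x y))\<^sup>2 / (cnorm ip y)\<^sup>2"
proof -
  define c q where "c = ip x y" and "q = (cnorm ip y)\<^sup>2"
  define t where "t = c / of_real q"
  have "q \<noteq> 0"
    using assms by (simp add: q_def cnorm_eq_0_iff)
  have yy: "ip y y = of_real q"
    by (simp add: q_def ip_self)
  have cc: "c * cnj c = of_real ((cmod c)\<^sup>2)"
    by (simp add: complex_mult_cnj cmod_power2 del: of_real_power)
  have "ip (x - sc t y) (x - sc t y) = ip x x - cnj t * c - t * cnj c + t * cnj t * of_real q"
    unfolding ip_diff_left ip_diff_right ip_scale_left ip_scale_right yy c_def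
      ip_conj_sym[of y x] by (simp add: algebra_simps)
  also have "cnj t * c = of_real ((cmod c)\<^sup>2 / q)"
    using cc by (simp add: t_def mult.commute)
  also have "t * cnj c = of_real ((cmod c)\<^sup>2 / q)"
    using cc by (simp add: t_def)
  also have "t * cnj t * of_real q = of_real ((cmod c)\<^sup>2 / q)"
    using cc \<open>q \<noteq> 0\<close> by (simp add: t_def power2_eq_square)
  finally have "(cnorm ip (x - sc t y))\<^sup>2 = (cnorm ip x)\<^sup>2 - (cmod c)\<^sup>2 / q"
    by (simp add: cnorm_power2)
  moreover have "ip x y / ip y y = t"
    by (simp add: t_def c_def yy)
  ultimately show ?thesis
    by (simp add: c_def q_def)
qed

lemma Cauchy_Schwarz: "cmod (ip x y) \<le> cnorm ip x * cnorm ip y"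
proof (cases "y = 0")
  case False
  then have pos: "0 < (cnorm ip y)\<^sup>2"
    using cnorm_eq_0_iff cnorm_nonneg by (simp add: order_less_le)
  have "0 \<le> (cnorm ip (x - sc (ip x y / ip y y) y))\<^sup>2"
    by simp
  then have "(cmod (ip x y))\<^sup>2 / (cnorm ip y)\<^sup>2 \<le> (cnorm ip x)\<^sup>2"
    unfolding cnorm_diff_projection[OF False] by linarith
  then have "(cmod (ip x y))\<^sup>2 \<le> (cnorm ip x * cnorm ip y)\<^sup>2"
    using pos by (simp add: pos_divide_le_eq power_mult_distrib)
  then show ?thesis
    by (rule power2_le_imp_le) (simp add: cnorm_nonneg)
qed (simp add: cnorm_nonneg)

lemma cnorm_triangle: "cnorm ip (x + y) \<le> cnorm ip x + cnorm ip y"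
proof -
  have "(cnorm ip (x + y))\<^sup>2 = Re (ip x x) + Re (ip y y) + 2 * Re (ip x y)"
    unfolding cnorm_power2 by (simp add: ip_add_left ip_add_right ip_conj_sym[of y x])
  also have "\<dots> \<le> (cnorm ip x + cnorm ip y)\<^sup>2"
    using Cauchy_Schwarz[of x y] complex_Re_le_cmod[of "ip x y"]
    by (simp add: power2_sum cnorm_power2)
  finally show ?thesis
    by (rule power2_le_imp_le) (simp add: cnorm_nonneg)
qed

lemma cnorm_triangle_diff: "cnorm ip (x - z) \<le> cnorm ip (x - y) + cnorm ip (y - z)"
  using cnorm_triangle[of "x - y" "y - z"] by simp

lemma parallelogram_law:
  "(cnorm ip (x + y))\<^sup>2 + (cnorm ip (x - y))\<^sup>2 = 2 * (cnorm ip x)\<^sup>2 + 2 * (cnorm ip y)\<^sup>2"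
  by (simp add: cnorm_power2 ip_add_left ip_add_right ip_diff_left ip_diff_right)

subsection \<open>Completeness, nearest points and the Riesz representation\<close>

definition Cauchy_seq :: "(nat \<Rightarrow> 'a) \<Rightarrow> bool" where
  "Cauchy_seq X \<longleftrightarrow> (\<forall>e>0. \<exists>N. \<forall>m\<ge>N. \<forall>n\<ge>N. cnorm ip (X m - X n) < e)"

definition converges_to :: "(nat \<Rightarrow> 'a) \<Rightarrow> 'a \<Rightarrow> bool" where
  "converges_to X L \<longleftrightarrow> (\<lambda>n. cnorm ip (X n - L)) \<longlonglongrightarrow> 0"

definition complete_subset :: "'a set \<Rightarrow> bool" where
  "complete_subset M \<longleftrightarrow>
     (\<forall>X. (\<forall>n. X n \<in> M) \<longrightarrow> Cauchy_seq X \<longrightarrow> (\<exists>L\<in>M. converges_to X L))"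

lemma converges_to_ip_left:
  assumes "converges_to X x"
  shows "(\<lambda>n. ip (X n) y) \<longlonglongrightarrow> ip x y"
proof -
  have "(\<lambda>n. cnorm ip (X n - x) * cnorm ip y) \<longlonglongrightarrow> 0"
    using assms tendsto_mult_left_zero unfolding converges_to_def by blast
  moreover have "norm (ip (X n) y - ip x y) \<le> cnorm ip (X n - x) * cnorm ip y" for n
    using Cauchy_Schwarz[of "X n - x" y] by (simp add: ip_diff_left)
  ultimately have "(\<lambda>n. ip (X n) y - ip x y) \<longlonglongrightarrow> 0"
    by (rule LIMSEQ_zero_dominated[rotated])
  then show ?thesis
    by (simp add: LIM_zero_iff)
qed

lemma complete_subset_orthogonal:
  assumes "complete_subset N"
  shows "complete_subset {x \<in> N. \<forall>v\<in>V. ip x v = 0}"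
  unfolding complete_subset_def
proof (intro allI impI)
  fix X assume X: "\<forall>n. X n \<in> {x \<in> N. \<forall>v\<in>V. ip x v = 0}" and "Cauchy_seq X"
  then obtain L where "L \<in> N" and L: "converges_to X L"
    using assms unfolding complete_subset_def by blast
  have "ip L v = 0" if "v \<in> V" for v
  proof -
    have "(\<lambda>n. ip (X n) v) = (\<lambda>n. 0)"
      using X that by auto
    then show ?thesis
      using converges_to_ip_left[OF L, of v] LIMSEQ_const_iff by metis
  qed
  then show "\<exists>L\<in>{x \<in> N. \<forall>v\<in>V. ip x v = 0}. converges_to X L"
    using \<open>L \<in> N\<close> L by blast
qed

lemma complete_UNIV_if_hilbert: "complex_hilbert_space sc ip \<Longrightarrow> complete_subset UNIV"
  unfolding complex_hilbert_space_def complete_subset_def Cauchy_seq_def converges_to_def by blast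

lemma Cauchy_seq_minimizing:
  assumes N: "subspace N" and X: "\<And>k. X k \<in> N"
    and lower: "\<And>n. n \<in> N \<Longrightarrow> d \<le> (cnorm ip (x - n))\<^sup>2"
    and close: "\<And>k. (cnorm ip (x - X k))\<^sup>2 < d + inverse (real (Suc k))"
  shows "Cauchy_seq X"
proof -
  have bound: "(cnorm ip (X i - X j))\<^sup>2 < 2 * inverse (real (Suc i)) + 2 * inverse (real (Suc j))"
    for i j
  proof -
    have "sc 2 x = x + x"
      using scale_left_distrib[of 1 1 x] by simp
    then have "(x - X i) + (x - X j) = sc 2 (x - sc (1/2) (X i + X j))"
      by (simp add: scale_right_diff_distrib algebra_simps)
    then have "(cnorm ip ((x - X i) + (x - X j)))\<^sup>2 = 4 * (cnorm ip (x - sc (1/2) (X i + X j)))\<^sup>2"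
      by (simp add: cnorm_scale power_mult_distrib)
    moreover have "d \<le> (cnorm ip (x - sc (1/2) (X i + X j)))\<^sup>2"
      using N X by (intro lower) (simp add: subspace_add subspace_scale)
    moreover have "(cnorm ip ((x - X i) - (x - X j)))\<^sup>2 = (cnorm ip (X i - X j))\<^sup>2"
      using cnorm_minus_commute[of "X j" "X i"] by simp
    ultimately show ?thesis
      using parallelogram_law[of "x - X i" "x - X j"] close[of i] close[of j] by linarith
  qed
  show ?thesis
    unfolding Cauchy_seq_def
  proof (intro allI impI)
    fix e :: real
    assume "e > 0"
    then obtain M where M: "inverse (real (Suc M)) < e\<^sup>2 / 4"
      using reals_Archimedean by (metis zero_less_divide_iff zero_less_numeral zero_less_power)
    have "cnorm ip (X m - X n) < e" if "M \<le> m" "M \<le> n" for m n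
    proof -
      have "inverse (real (Suc m)) \<le> inverse (real (Suc M))"
        and "inverse (real (Suc n)) \<le> inverse (real (Suc M))"
        using that by (simp_all add: le_imp_inverse_le)
      then have "(cnorm ip (X m - X n))\<^sup>2 < e\<^sup>2"
        using bound[of m n] M by linarith
      then show ?thesis
        using \<open>e > 0\<close> by (simp add: power2_less_imp_less)
    qed
    then show "\<exists>M. \<forall>m\<ge>M. \<forall>n\<ge>M. cnorm ip (X m - X n) < e"
      by blast
  qed
qed

lemma cnorm_limit_le:
  assumes m: "converges_to X m" and "0 \<le> d"
    and close: "\<And>k. (cnorm ip (x - X k))\<^sup>2 < d + inverse (real (Suc k))"
  shows "(cnorm ip (x - m))\<^sup>2 \<le> d"
proof -
  have bound: "cnorm ip (x - m) \<le> sqrt (d + inverse (real (Suc k))) + cnorm ip (X k - m)" for k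
  proof -
    have "cnorm ip (x - X k) \<le> sqrt (d + inverse (real (Suc k)))"
      using close[of k] by (intro real_le_rsqrt) simp
    then show ?thesis
      using cnorm_triangle_diff[of x m "X k"] by linarith
  qed
  have lim: "(\<lambda>k. sqrt (d + inverse (real (Suc k))) + cnorm ip (X k - m)) \<longlonglongrightarrow> sqrt (d + 0) + 0"
    by (rule tendsto_add[OF tendsto_real_sqrt[OF tendsto_add[OF tendsto_const
          LIMSEQ_inverse_real_of_nat]] m[unfolded converges_to_def]])
  have "cnorm ip (x - m) \<le> sqrt (d + 0) + 0"
    by (rule LIMSEQ_le_const[OF lim]) (use bound in blast)
  then have "(cnorm ip (x - m))\<^sup>2 \<le> (sqrt d)\<^sup>2"
    by (intro power_mono) (simp_all add: cnorm_nonneg)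
  then show ?thesis
    using \<open>0 \<le> d\<close> by simp
qed

lemma nearest_point_exists:
  assumes N: "subspace N" "complete_subset N"
  shows "\<exists>m\<in>N. \<forall>n\<in>N. cnorm ip (x - m) \<le> cnorm ip (x - n)"
proof -
  define d where "d = Inf ((\<lambda>n. (cnorm ip (x - n))\<^sup>2) ` N)"
  have "N \<noteq> {}"
    using N subspace_0 by blast
  have lower: "d \<le> (cnorm ip (x - n))\<^sup>2" if "n \<in> N" for n
    unfolding d_def using that by (intro cInf_lower bdd_belowI[of _ 0]) auto
  have "0 \<le> d"
    unfolding d_def using \<open>N \<noteq> {}\<close> by (intro cINF_greatest) auto
  have "\<exists>n\<in>N. (cnorm ip (x - n))\<^sup>2 < d + inverse (real (Suc k))" for k
    using cInf_lessD[of "(\<lambda>n. (cnorm ip (x - n))\<^sup>2) ` N" "d + inverse (real (Suc k))"]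
      \<open>N \<noteq> {}\<close> unfolding d_def by auto
  then obtain X where X: "\<And>k. X k \<in> N"
    and close: "\<And>k. (cnorm ip (x - X k))\<^sup>2 < d + inverse (real (Suc k))"
    by metis
  obtain m where "m \<in> N" and m: "converges_to X m"
    using N X Cauchy_seq_minimizing[OF N(1) X lower close] unfolding complete_subset_def by blast
  have "cnorm ip (x - m) \<le> cnorm ip (x - n)" if "n \<in> N" for n
  proof (rule power2_le_imp_le)
    show "(cnorm ip (x - m))\<^sup>2 \<le> (cnorm ip (x - n))\<^sup>2"
      using cnorm_limit_le[OF m \<open>0 \<le> d\<close> close] lower[OF that] by linarith
  qed (rule cnorm_nonneg)
  then show ?thesis
    using \<open>m \<in> N\<close> by blast
qed

lemma nearest_point_orthogonal:
  assumes N: "subspace N" and "m \<in> N" "n \<in> N"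
    and min: "\<forall>n\<in>N. cnorm ip (x - m) \<le> cnorm ip (x - n)"
  shows "ip n (x - m) = 0"
proof (cases "n = 0")
  case False
  define t where "t = ip (x - m) n / ip n n"
  have "m + sc t n \<in> N"
    using N \<open>m \<in> N\<close> \<open>n \<in> N\<close> by (simp add: subspace_add subspace_scale)
  then have "cnorm ip (x - m) \<le> cnorm ip ((x - m) - sc t n)"
    using min by (simp add: diff_diff_eq)
  then have "(cnorm ip (x - m))\<^sup>2 \<le> (cnorm ip ((x - m) - sc t n))\<^sup>2"
    by (rule power_mono) (simp add: cnorm_nonneg)
  also have "\<dots> = (cnorm ip (x - m))\<^sup>2 - (cmod (ip (x - m) n))\<^sup>2 / (cnorm ip n)\<^sup>2"
    unfolding t_def by (rule cnorm_diff_projection[OF False])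
  finally have "(cmod (ip (x - m) n))\<^sup>2 / (cnorm ip n)\<^sup>2 \<le> 0"
    by simp
  moreover have "0 < (cnorm ip n)\<^sup>2"
    using False by (simp add: cnorm_eq_0_iff)
  ultimately have "(cmod (ip (x - m) n))\<^sup>2 \<le> 0"
    by (simp add: divide_le_0_iff)
  then have "ip (x - m) n = 0"
    by simp
  then show ?thesis
    using ip_conj_sym[of "x - m" n] by simp
qed simp

lemma orthogonal_projection_exists:
  assumes "subspace N" "complete_subset N"
  shows "\<exists>m\<in>N. \<forall>n\<in>N. ip n (x - m) = 0"
proof -
  obtain m where "m \<in> N" and "\<forall>n\<in>N. cnorm ip (x - m) \<le> cnorm ip (x - n)"
    using nearest_point_exists[OF assms] by blast
  then show ?thesis
    using nearest_point_orthogonal[OF assms(1) \<open>m \<in> N\<close>] by blast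
qed

lemma antidual_diff:
  assumes F: "F \<in> antidual M sc N" and M: "subspace M" "u \<in> M" "v \<in> M"
  shows "F (u - v) = F u - F v"
proof -
  have "sc (-1) v \<in> M"
    using M subspace_scale by blast
  then have "F (u + sc (-1) v) = F u + F (sc (-1) v)"
    using F M unfolding antidual_def by blast
  also have "F (sc (-1) v) = cnj (-1) * F v"
    using F M unfolding antidual_def by blast
  finally show ?thesis
    by simp
qed

lemma complete_subset_kernel:
  assumes M: "subspace M" "complete_subset M" and F: "F \<in> antidual M sc (cnorm ip)"
  shows "complete_subset {u \<in> M. F u = 0}"
  unfolding complete_subset_def
proof (intro allI impI)
  fix X assume X: "\<forall>n. X n \<in> {u \<in> M. F u = 0}" and "Cauchy_seq X"
  then obtain L where "L \<in> M" and L: "converges_to X L"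
    using M unfolding complete_subset_def by blast
  obtain C where C: "\<forall>u\<in>M. cmod (F u) \<le> C * cnorm ip u"
    using F unfolding antidual_def by blast
  have "cmod (F L) \<le> C * cnorm ip (X n - L)" for n
  proof -
    have "F (L - X n) = F L" and "L - X n \<in> M"
      using antidual_diff[OF F M(1) \<open>L \<in> M\<close>, of "X n"] X subspace_diff[OF M(1) \<open>L \<in> M\<close>, of "X n"]
      by auto
    then show ?thesis
      using C cnorm_minus_commute[of L "X n"] by force
  qed
  moreover have "(\<lambda>n. C * cnorm ip (X n - L)) \<longlonglongrightarrow> C * 0"
    using L unfolding converges_to_def by (rule tendsto_mult_left)
  ultimately have "cmod (F L) \<le> 0"
    by (intro LIMSEQ_le_const[of _ 0]) auto
  then show "\<exists>L\<in>{u \<in> M. F u = 0}. converges_to X L"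
    using \<open>L \<in> M\<close> L by auto
qed

lemma antidual_eq_ip_if_orthogonal_kernel:
  assumes M: "subspace M" and F: "F \<in> antidual M sc N" and z: "z \<in> M" "ip z z \<noteq> 0"
    and orth: "\<forall>n\<in>M. F n = 0 \<longrightarrow> ip n z = 0" and u: "u \<in> M"
  shows "F u = ip (sc (F z / ip z z) z) u"
proof -
  have Fsc: "F (sc a v) = cnj a * F v" if "v \<in> M" for a v
    using F that unfolding antidual_def by blast
  define u' where "u' = sc (cnj (F u)) z - sc (cnj (F z)) u"
  have "sc (cnj (F u)) z \<in> M" "sc (cnj (F z)) u \<in> M"
    using M z u by (simp_all add: subspace_scale)
  then have "u' \<in> M" and "F u' = 0"
    using antidual_diff[OF F M] Fsc z u by (simp_all add: u'_def subspace_diff[OF M] mult.commute)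
  then have "ip u' z = 0"
    using orth by blast
  then have "cnj (F u) * ip z z - cnj (F z) * ip u z = 0"
    by (simp add: u'_def ip_diff_left ip_scale_left)
  then have "cnj (cnj (F u) * ip z z - cnj (F z) * ip u z) = 0"
    by simp
  then have "F u * ip z z = F z * ip z u"
    by (simp add: ip_self ip_conj_sym[of u z])
  then show ?thesis
    using z by (simp add: ip_scale_left field_simps)
qed

lemma riesz_representation:
  assumes M: "subspace M" "complete_subset M" and F: "F \<in> antidual M sc (cnorm ip)"
  shows "\<exists>w\<in>M. \<forall>u\<in>M. F u = ip w u"
proof (cases "\<forall>u\<in>M. F u = 0")
  case True
  then show ?thesis
    using M subspace_0 by force
next
  case False
  then obtain x where "x \<in> M" "F x \<noteq> 0"
    by blast
  have Fadd: "F (u + v) = F u + F v" and Fsc: "F (sc a u) = cnj a * F u" if "u \<in> M" "v \<in> M" for a u v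
    using F that unfolding antidual_def by blast+
  define K where "K = {u \<in> M. F u = 0}"
  have "F 0 = 0"
    using Fadd[of 0 0] M(1) subspace_0 by simp
  then have "subspace K"
    using M(1) Fadd Fsc by (auto simp: K_def subspace_def)
  then obtain m where "m \<in> K" and m: "\<forall>n\<in>K. ip n (x - m) = 0"
    using orthogonal_projection_exists complete_subset_kernel[OF M F] unfolding K_def by blast
  define z where "z = x - m"
  have "z \<in> M" and "F z = F x"
    using \<open>x \<in> M\<close> \<open>m \<in> K\<close> M(1) antidual_diff[OF F M(1)]
    by (auto simp: z_def K_def subspace_diff)
  then have "ip z z \<noteq> 0"
    using \<open>F x \<noteq> 0\<close> antidual_diff[OF F M(1) \<open>z \<in> M\<close> \<open>z \<in> M\<close>] ip_self_eq_0 by force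
  moreover have "\<forall>n\<in>M. F n = 0 \<longrightarrow> ip n z = 0"
    using m by (simp add: z_def K_def)
  ultimately have "\<forall>u\<in>M. F u = ip (sc (F z / ip z z) z) u"
    using antidual_eq_ip_if_orthogonal_kernel[OF M(1) F \<open>z \<in> M\<close>] by blast
  moreover have "sc (F z / ip z z) z \<in> M"
    using M(1) \<open>z \<in> M\<close> by (simp add: subspace_scale)
  ultimately show ?thesis
    by blast
qed

lemma ip_antidual: "ip w \<in> antidual S sc (cnorm ip)"
  unfolding antidual_def
  by (auto simp: ip_add_right ip_scale_right intro!: exI[of _ "cnorm ip w"] Cauchy_Schwarz)

lemma dual_norm_ip:
  assumes S: "subspace S" "w \<in> S"
  shows "dual_norm S (cnorm ip) (ip w) = cnorm ip w"
proof -
  define V where "V = {cmod (ip w u) | u. u \<in> S \<and> cnorm ip u \<le> 1}"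
  have upper: "v \<le> cnorm ip w" if v: "v \<in> V" for v
  proof -
    obtain u where "v = cmod (ip w u)" "cnorm ip u \<le> 1"
      using v unfolding V_def by blast
    then show ?thesis
      using Cauchy_Schwarz[of w u] mult_left_le[of "cnorm ip u" "cnorm ip w"] cnorm_nonneg[of w]
      by linarith
  qed
  have "cnorm ip w \<in> V"
  proof (cases "w = 0")
    case True
    then show ?thesis
      using S subspace_0 cnorm_eq_0_iff unfolding V_def by fastforce
  next
    case False
    define n where "n = cnorm ip w"
    have "n > 0"
      using False cnorm_eq_0_iff cnorm_nonneg by (simp add: n_def order_less_le)
    define u where "u = sc (of_real (1 / n)) w"
    have "u \<in> S"
      using S by (simp add: u_def subspace_scale)
    moreover have "cnorm ip u = 1"
      using \<open>n > 0\<close> by (simp add: u_def cnorm_scale norm_divide n_def[symmetric])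
    moreover have "ip w u = of_real (1 / n) * of_real (n\<^sup>2)"
      by (simp add: u_def ip_scale_right ip_self n_def)
    then have "cmod (ip w u) = n"
      using \<open>n > 0\<close> by (simp add: power2_eq_square)
    ultimately show ?thesis
      unfolding V_def n_def by force
  qed
  then show ?thesis
    unfolding dual_norm_def V_def[symmetric] by (rule cSup_eq_maximum) (rule upper)
qed

lemma orthogonal_dense_eq:
  assumes dense: "\<forall>x. \<forall>e>0. \<exists>y\<in>S. cnorm ip (x - y) < e"
    and orth: "\<forall>u\<in>S. ip u a = ip u b"
  shows "a = b"
proof -
  define c where "c = a - b"
  have orth_c: "ip u c = 0" if "u \<in> S" for u
    using orth that by (simp add: c_def ip_diff_right)
  have "cnorm ip c = 0"
  proof (rule ccontr)
    assume "cnorm ip c \<noteq> 0"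
    then have "cnorm ip c > 0"
      using cnorm_nonneg[of c] by linarith
    then obtain y where "y \<in> S" and y: "cnorm ip (c - y) < cnorm ip c"
      using dense by blast
    have "(cnorm ip c)\<^sup>2 = Re (ip (c - y) c)"
      using orth_c[OF \<open>y \<in> S\<close>] by (simp add: cnorm_power2 ip_diff_left)
    also have "\<dots> \<le> cnorm ip (c - y) * cnorm ip c"
      using Cauchy_Schwarz[of "c - y" c] complex_Re_le_cmod[of "ip (c - y) c"] by linarith
    also have "\<dots> < (cnorm ip c)\<^sup>2"
      using y \<open>cnorm ip c > 0\<close> by (simp add: power2_eq_square)
    finally show False
      by simp
  qed
  then show ?thesis
    by (simp add: c_def cnorm_eq_0_iff)
qed

end

section \<open>Pairs of Hilbert spaces and graphs of operators\<close>

lemma complex_inner_product_if_inner_space: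
  "complex_inner_space sc ip \<Longrightarrow> complex_inner_product sc ip"
  unfolding complex_inner_space_def complex_inner_product_def complex_inner_product_axioms_def
  by (elim conjE, intro conjI) blast+

definition prod_scale ::
  "(complex \<Rightarrow> 'a \<Rightarrow> 'a) \<Rightarrow> (complex \<Rightarrow> 'b \<Rightarrow> 'b) \<Rightarrow> complex \<Rightarrow> 'a \<times> 'b \<Rightarrow> 'a \<times> 'b" where
  "prod_scale sc0 sc1 c p = (sc0 c (fst p), sc1 c (snd p))"

definition prod_ip ::
  "('a \<Rightarrow> 'a \<Rightarrow> complex) \<Rightarrow> ('b \<Rightarrow> 'b \<Rightarrow> complex) \<Rightarrow> 'a \<times> 'b \<Rightarrow> 'a \<times> 'b \<Rightarrow> complex" where
  "prod_ip ip0 ip1 p q = ip0 (fst p) (fst q) + ip1 (snd p) (snd q)"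

lemma complex_inner_product_prod:
  assumes "complex_inner_product sc0 ip0" "complex_inner_product sc1 ip1"
  shows "complex_inner_product (prod_scale sc0 sc1) (prod_ip ip0 ip1)"
proof -
  interpret A: complex_inner_product sc0 ip0 by fact
  interpret B: complex_inner_product sc1 ip1 by fact
  show ?thesis
  proof unfold_locales
    fix a b :: complex and x y z :: "'a \<times> 'b"
    show "prod_scale sc0 sc1 a (x + y) = prod_scale sc0 sc1 a x + prod_scale sc0 sc1 a y"
      and "prod_scale sc0 sc1 (a + b) x = prod_scale sc0 sc1 a x + prod_scale sc0 sc1 b x"
      and "prod_scale sc0 sc1 a (prod_scale sc0 sc1 b x) = prod_scale sc0 sc1 (a * b) x"
      and "prod_scale sc0 sc1 1 x = x"
      by (simp_all add: prod_scale_def A.scale_right_distrib A.scale_left_distrib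
          B.scale_right_distrib B.scale_left_distrib)
    show "prod_ip ip0 ip1 (x + y) z = prod_ip ip0 ip1 x z + prod_ip ip0 ip1 y z"
      and "prod_ip ip0 ip1 (prod_scale sc0 sc1 a x) y = a * prod_ip ip0 ip1 x y"
      and "prod_ip ip0 ip1 y x = cnj (prod_ip ip0 ip1 x y)"
      and "0 \<le> Re (prod_ip ip0 ip1 x x)"
        by (simp_all add: prod_ip_def prod_scale_def A.ip_add_left B.ip_add_left A.ip_scale_left
          B.ip_scale_left distrib_left A.ip_conj_sym[of "fst y" "fst x"]
          B.ip_conj_sym[of "snd y" "snd x"] A.ip_self_nonneg B.ip_self_nonneg add_nonneg_nonneg)
  next
    fix x :: "'a \<times> 'b"
    assume "prod_ip ip0 ip1 x x = 0"
    then have "(cnorm ip0 (fst x))\<^sup>2 + (cnorm ip1 (snd x))\<^sup>2 = 0"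
      by (simp add: prod_ip_def A.cnorm_power2 B.cnorm_power2 flip: plus_complex.sel(1))
    then show "x = 0"
      by (simp add: A.cnorm_eq_0_iff B.cnorm_eq_0_iff prod_eq_iff add_nonneg_eq_0_iff)
  qed
qed

locale hilbert_pair =
  H0: complex_inner_product sc0 ip0 + H1: complex_inner_product sc1 ip1
  for sc0 :: "complex \<Rightarrow> 'a::ab_group_add \<Rightarrow> 'a" and ip0
    and sc1 :: "complex \<Rightarrow> 'b::ab_group_add \<Rightarrow> 'b" and ip1 +
  assumes complete0: "H0.complete_subset UNIV" and complete1: "H1.complete_subset UNIV"
begin

sublocale P: complex_inner_product "prod_scale sc0 sc1" "prod_ip ip0 ip1"
  by (intro complex_inner_product_prod) unfold_locales

lemma cnorm_prod: "cnorm (prod_ip ip0 ip1) p = sqrt ((cnorm ip0 (fst p))\<^sup>2 + (cnorm ip1 (snd p))\<^sup>2)"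
  using H0.cnorm_power2 H1.cnorm_power2 by (simp add: cnorm_def prod_ip_def)

lemma cnorm_fst_le: "cnorm ip0 (fst p) \<le> cnorm (prod_ip ip0 ip1) p"
  and cnorm_snd_le: "cnorm ip1 (snd p) \<le> cnorm (prod_ip ip0 ip1) p"
  by (simp_all add: cnorm_prod real_le_rsqrt)

lemma cnorm_prod_le: "cnorm (prod_ip ip0 ip1) p \<le> cnorm ip0 (fst p) + cnorm ip1 (snd p)"
  using sqrt_add_le_add_sqrt[of "(cnorm ip0 (fst p))\<^sup>2" "(cnorm ip1 (snd p))\<^sup>2"]
    H0.cnorm_nonneg[of "fst p"] H1.cnorm_nonneg[of "snd p"]
  by (simp add: cnorm_prod)

lemma Cauchy_seq_fst: "P.Cauchy_seq X \<Longrightarrow> H0.Cauchy_seq (\<lambda>n. fst (X n))"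
  and Cauchy_seq_snd: "P.Cauchy_seq X \<Longrightarrow> H1.Cauchy_seq (\<lambda>n. snd (X n))"
  unfolding P.Cauchy_seq_def H0.Cauchy_seq_def H1.Cauchy_seq_def
  by (metis cnorm_fst_le fst_diff le_less_trans, metis cnorm_snd_le snd_diff le_less_trans)

lemma complete_prod: "P.complete_subset UNIV"
  unfolding P.complete_subset_def
proof (intro allI impI)
  fix X :: "nat \<Rightarrow> 'a \<times> 'b"
  assume "P.Cauchy_seq X"
  then obtain L0 L1 where L0: "H0.converges_to (\<lambda>n. fst (X n)) L0"
    and L1: "H1.converges_to (\<lambda>n. snd (X n)) L1"
    using complete0 complete1 Cauchy_seq_fst Cauchy_seq_snd
    unfolding H0.complete_subset_def H1.complete_subset_def by blast
  have "norm (cnorm (prod_ip ip0 ip1) (X n - (L0, L1)))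
          \<le> cnorm ip0 (fst (X n) - L0) + cnorm ip1 (snd (X n) - L1)" for n
    using cnorm_prod_le[of "X n - (L0, L1)"] P.cnorm_nonneg by simp
  moreover have "(\<lambda>n. cnorm ip0 (fst (X n) - L0) + cnorm ip1 (snd (X n) - L1)) \<longlonglongrightarrow> 0"
    using tendsto_add[OF L0[unfolded H0.converges_to_def] L1[unfolded H1.converges_to_def]] by simp
  ultimately have "P.converges_to X (L0, L1)"
    unfolding P.converges_to_def by (rule LIMSEQ_zero_dominated)
  then show "\<exists>L\<in>UNIV. P.converges_to X L"
    by blast
qed

end

definition op_graph :: "'a set \<Rightarrow> ('a \<Rightarrow> 'b) \<Rightarrow> ('a \<times> 'b) set" where
  "op_graph S T = (\<lambda>u. (u, T u)) ` S"

definition graph_ip ::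
  "('a \<Rightarrow> 'a \<Rightarrow> complex) \<Rightarrow> ('b \<Rightarrow> 'b \<Rightarrow> complex) \<Rightarrow> ('a \<Rightarrow> 'b) \<Rightarrow> 'a \<Rightarrow> 'a \<Rightarrow> complex" where
  "graph_ip ip0 ip1 T u v = ip0 u v + ip1 (T u) (T v)"

text \<open>-T* \<subseteq> S, stated through the defining relation of T* rather than through adj, which is
  unspecified outside the domain of the adjoint.\<close>

definition minus_adj_subset ::
  "('a::uminus \<Rightarrow> 'a \<Rightarrow> complex) \<Rightarrow> ('b \<Rightarrow> 'b \<Rightarrow> complex) \<Rightarrow> 'a set \<Rightarrow> ('a \<Rightarrow> 'b) \<Rightarrow> 'b set
    \<Rightarrow> ('b \<Rightarrow> 'a) \<Rightarrow> bool" where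
  "minus_adj_subset ip0 ip1 dm T dmS S \<longleftrightarrow>
     (\<forall>v w. (\<forall>u\<in>dm. ip1 (T u) v = ip0 u w) \<longrightarrow> v \<in> dmS \<and> S v = - w)"

lemma prod_ip_graph: "prod_ip ip0 ip1 (u, T u) (v, T v) = graph_ip ip0 ip1 T u v"
  by (simp add: prod_ip_def graph_ip_def)

lemma graph_norm_eq_cnorm: "graph_norm ip0 ip1 T u = cnorm (prod_ip ip0 ip1) (u, T u)"
  by (simp add: graph_norm_def cnorm_def prod_ip_def)

lemma dual_norm_op_graph:
  assumes "\<forall>u\<in>S. g (u, T u) = f u"
  shows "dual_norm (op_graph S T) (cnorm (prod_ip ip0 ip1)) g = dual_norm S (graph_norm ip0 ip1 T) f"
  unfolding dual_norm_def op_graph_def graph_norm_eq_cnorm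
  by (rule arg_cong[where f = Sup]) (use assms in force)

context hilbert_pair
begin

definition linear_on :: "'a set \<Rightarrow> ('a \<Rightarrow> 'b) \<Rightarrow> bool" where
  "linear_on S T \<longleftrightarrow> H0.subspace S \<and> (\<forall>x\<in>S. \<forall>y\<in>S. T (x + y) = T x + T y) \<and>
     (\<forall>a. \<forall>x\<in>S. T (sc0 a x) = sc1 a (T x))"

lemma linear_on_if_densely_defined: "densely_defined_op sc0 ip0 sc1 dm T \<Longrightarrow> linear_on dm T"
  unfolding densely_defined_op_def linear_on_def by blast

lemma linear_on_zero: "linear_on S T \<Longrightarrow> T 0 = 0"
  unfolding linear_on_def using H0.subspace_0 by (metis add_cancel_right_right add_0)

lemma linear_on_BD:
  assumes "linear_on dm T"
  shows "linear_on (BD ip0 ip1 dm T V) T"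
proof -
  have dm: "H0.subspace dm" and add: "\<And>x y. x \<in> dm \<Longrightarrow> y \<in> dm \<Longrightarrow> T (x + y) = T x + T y"
    and scale: "\<And>a x. x \<in> dm \<Longrightarrow> T (sc0 a x) = sc1 a (T x)"
    using assms unfolding linear_on_def by blast+
  have "H0.subspace (BD ip0 ip1 dm T V)"
    using dm add scale linear_on_zero[OF assms]
    by (auto simp: H0.subspace_def BD_def H0.ip_add_left H1.ip_add_left H0.ip_scale_left
        H1.ip_scale_left algebra_simps distrib_left[symmetric])
  then show ?thesis
    using add scale unfolding linear_on_def BD_def by simp
qed

lemma subspace_op_graph:
  assumes "linear_on S T"
  shows "P.subspace (op_graph S T)"
  using assms linear_on_zero[OF assms]
  unfolding linear_on_def H0.subspace_def P.subspace_def op_graph_def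
  by (auto simp: prod_scale_def image_iff zero_prod_def intro!: bexI)

lemma converges_to_fst: "P.converges_to X L \<Longrightarrow> H0.converges_to (\<lambda>n. fst (X n)) (fst L)"
  and converges_to_snd: "P.converges_to X L \<Longrightarrow> H1.converges_to (\<lambda>n. snd (X n)) (snd L)"
  unfolding P.converges_to_def H0.converges_to_def H1.converges_to_def
  by (rule LIMSEQ_zero_dominated[of _ "\<lambda>n. cnorm (prod_ip ip0 ip1) (X n - L)"];
      simp add: H0.cnorm_nonneg H1.cnorm_nonneg cnorm_fst_le[of "X _ - L", simplified]
        cnorm_snd_le[of "X _ - L", simplified])+

lemma complete_op_graph:
  assumes "closed_op ip0 ip1 dm T"
  shows "P.complete_subset (op_graph dm T)"
  unfolding P.complete_subset_def
proof (intro allI impI)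
  fix X assume X: "\<forall>n. X n \<in> op_graph dm T" and "P.Cauchy_seq X"
  then obtain L where L: "P.converges_to X L"
    using complete_prod unfolding P.complete_subset_def by blast
  have dm: "fst (X n) \<in> dm" and graph: "T (fst (X n)) = snd (X n)" for n
    using X[rule_format, of n] by (auto simp: op_graph_def)
  have "(\<lambda>n. cnorm ip1 (T (fst (X n)) - snd L)) \<longlonglongrightarrow> 0"
    using converges_to_snd[OF L] unfolding H1.converges_to_def by (simp add: graph)
  then have "fst L \<in> dm \<and> T (fst L) = snd L"
    using assms[unfolded closed_op_def, rule_format, of "\<lambda>n. fst (X n)" "fst L" "snd L"]
      converges_to_fst[OF L] dm unfolding H0.converges_to_def by blast
  then have "L \<in> op_graph dm T"
    by (auto simp: op_graph_def image_iff prod_eq_iff)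
  then show "\<exists>L\<in>op_graph dm T. P.converges_to X L"
    using L by blast
qed

lemma complete_op_graph_BD:
  assumes "closed_op ip0 ip1 dm T"
  shows "P.complete_subset (op_graph (BD ip0 ip1 dm T V) T)"
proof -
  have "op_graph (BD ip0 ip1 dm T V) T
          = {p \<in> op_graph dm T. \<forall>q\<in>op_graph V T. prod_ip ip0 ip1 p q = 0}"
    by (auto simp: op_graph_def BD_def prod_ip_def)
  then show ?thesis
    using P.complete_subset_orthogonal[OF complete_op_graph[OF assms]] by simp
qed

lemma antidual_op_graph_iff:
  assumes lin: "linear_on S T" and g: "\<forall>u\<in>S. g (u, T u) = f u"
  shows "g \<in> antidual (op_graph S T) (prod_scale sc0 sc1) (cnorm (prod_ip ip0 ip1))
           \<longleftrightarrow> f \<in> antidual S sc0 (graph_norm ip0 ip1 T)"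
proof -
  have g_add: "g (x + y, T x + T y) = f (x + y)" if "x \<in> S" "y \<in> S" for x y
  proof -
    have "x + y \<in> S" and "T (x + y) = T x + T y"
      using lin that unfolding linear_on_def H0.subspace_def by auto
    then show ?thesis
      using g by force
  qed
  have g_scale: "g (sc0 a x, sc1 a (T x)) = f (sc0 a x)" if "x \<in> S" for a x
  proof -
    have "sc0 a x \<in> S" and "T (sc0 a x) = sc1 a (T x)"
      using lin that unfolding linear_on_def H0.subspace_def by auto
    then show ?thesis
      using g by force
  qed
  show ?thesis
    unfolding antidual_def op_graph_def graph_norm_eq_cnorm
    using g g_add g_scale by (auto simp: prod_scale_def)
qed

lemma graph_ip_antidual:
  "linear_on S T \<Longrightarrow> graph_ip ip0 ip1 T w \<in> antidual S sc0 (graph_norm ip0 ip1 T)"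
  using antidual_op_graph_iff[of S T "prod_ip ip0 ip1 (w, T w)"] P.ip_antidual
  by (simp add: prod_ip_graph)

lemma dual_norm_graph_ip:
  assumes "linear_on S T" "w \<in> S"
  shows "dual_norm S (graph_norm ip0 ip1 T) (graph_ip ip0 ip1 T w) = graph_norm ip0 ip1 T w"
proof -
  have "(w, T w) \<in> op_graph S T"
    using assms(2) by (simp add: op_graph_def)
  have "dual_norm S (graph_norm ip0 ip1 T) (graph_ip ip0 ip1 T w)
          = dual_norm (op_graph S T) (cnorm (prod_ip ip0 ip1)) (prod_ip ip0 ip1 (w, T w))"
    by (rule dual_norm_op_graph[symmetric]) (simp add: prod_ip_graph)
  also have "\<dots> = cnorm (prod_ip ip0 ip1) (w, T w)"
    by (rule P.dual_norm_ip[OF subspace_op_graph[OF assms(1)] \<open>(w, T w) \<in> op_graph S T\<close>])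
  finally show ?thesis
    by (simp add: graph_norm_eq_cnorm)
qed

lemma graph_riesz:
  assumes lin: "linear_on S T" and complete: "P.complete_subset (op_graph S T)"
    and f: "f \<in> antidual S sc0 (graph_norm ip0 ip1 T)"
  shows "\<exists>w\<in>S. \<forall>u\<in>S. f u = graph_ip ip0 ip1 T w u"
proof -
  have "(\<lambda>p. f (fst p)) \<in> antidual (op_graph S T) (prod_scale sc0 sc1) (cnorm (prod_ip ip0 ip1))"
    using antidual_op_graph_iff[OF lin, of "\<lambda>p. f (fst p)" f] f by simp
  then obtain p where "p \<in> op_graph S T" and p: "\<forall>q\<in>op_graph S T. f (fst q) = prod_ip ip0 ip1 p q"
    using P.riesz_representation[OF subspace_op_graph[OF lin] complete] by blast
  then obtain w where "w \<in> S" "p = (w, T w)"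
    unfolding op_graph_def by blast
  then show ?thesis
    using p by (auto simp: op_graph_def prod_ip_graph)
qed

lemma riesz_BD:
  assumes "densely_defined_op sc0 ip0 sc1 dm T" "closed_op ip0 ip1 dm T"
    and "f \<in> antidual (BD ip0 ip1 dm T V) sc0 (graph_norm ip0 ip1 T)"
  shows "\<exists>w\<in>BD ip0 ip1 dm T V. \<forall>u\<in>BD ip0 ip1 dm T V. f u = graph_ip ip0 ip1 T w u"
  using graph_riesz[OF linear_on_BD[OF linear_on_if_densely_defined] complete_op_graph_BD] assms
  by blast

subsection \<open>Adjoints and boundary spaces\<close>

lemma adj_eqI:
  assumes dd: "densely_defined_op sc0 ip0 sc1 dm T" and vw: "\<forall>u\<in>dm. ip1 (T u) v = ip0 u w"
  shows "adj ip0 ip1 dm T v = w"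
  unfolding adj_def
proof (rule the_equality)
  fix w' assume "\<forall>u\<in>dm. ip1 (T u) v = ip0 u w'"
  then have "\<forall>u\<in>dm. ip0 u w' = ip0 u w"
    using vw by simp
  then show "w' = w"
    using dd H0.orthogonal_dense_eq unfolding densely_defined_op_def by blast
qed (rule vw)

lemma minus_adj_subset_if_adj:
  assumes dd: "densely_defined_op sc0 ip0 sc1 dm T"
    and ext: "\<forall>v\<in>adj_dom ip0 ip1 dm T. v \<in> dmS \<and> S v = - adj ip0 ip1 dm T v"
  shows "minus_adj_subset ip0 ip1 dm T dmS S"
  unfolding minus_adj_subset_def
proof (intro allI impI)
  fix v w assume vw: "\<forall>u\<in>dm. ip1 (T u) v = ip0 u w"
  then have "v \<in> adj_dom ip0 ip1 dm T"
    unfolding adj_dom_def by blast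
  then show "v \<in> dmS \<and> S v = - w"
    using ext adj_eqI[OF dd vw] by simp
qed

lemma closed_op_adjoint_adjoint:
  assumes dd: "densely_defined_op sc0 ip0 sc1 dm T" and closed: "closed_op ip0 ip1 dm T"
    and orth: "\<forall>r r'. (\<forall>u\<in>dm. ip1 (T u) r = ip0 u r') \<longrightarrow> ip0 r' v = ip1 r z"
  shows "v \<in> dm \<and> T v = z"
proof -
  have lin: "linear_on dm T"
    using dd by (rule linear_on_if_densely_defined)
  obtain m where "m \<in> op_graph dm T" and m: "\<forall>n\<in>op_graph dm T. prod_ip ip0 ip1 n ((v, z) - m) = 0"
    using P.orthogonal_projection_exists[OF subspace_op_graph[OF lin] complete_op_graph[OF closed]]
    by blast
  then obtain u where "u \<in> dm" and "m = (u, T u)"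
    unfolding op_graph_def by blast
  define p r where "p = v - u" and "r = z - T u"
  (* (p, r) is orthogonal to the graph of T, i.e. (r, -p) lies in the graph of T*; the hypothesis
     then makes (p, r) orthogonal to (v, z) as well, hence to itself. *)
  have pr: "ip0 u' p + ip1 (T u') r = 0" if "u' \<in> dm" for u'
    using m that \<open>m = (u, T u)\<close> by (auto simp: op_graph_def prod_ip_def p_def r_def)
  then have "\<forall>u'\<in>dm. ip1 (T u') r = ip0 u' (- p)"
    by (simp add: H0.ip_minus_right eq_neg_iff_add_eq_0 add.commute)
  then have "ip0 (- p) v = ip1 r z"
    using orth by blast
  then have "ip1 r z = - ip0 p v"
    by (simp add: H0.ip_minus_left)
  then have "ip0 p v + ip1 r z = 0"
    by simp
  moreover have "ip0 p u + ip1 r (T u) = 0"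
    using arg_cong[OF pr[OF \<open>u \<in> dm\<close>], of cnj]
    by (simp add: H0.ip_conj_sym[of p u] H1.ip_conj_sym[of r "T u"])
  moreover have "prod_ip ip0 ip1 (p, r) (p, r) = (ip0 p v + ip1 r z) - (ip0 p u + ip1 r (T u))"
    using H0.ip_diff_right[of p v u] H1.ip_diff_right[of r z "T u"]
    by (simp add: prod_ip_def p_def r_def)
  ultimately have "prod_ip ip0 ip1 (p, r) (p, r) = 0"
    by simp
  then have "(p, r) = 0"
    by (rule P.ip_self_eq_0)
  then have "p = 0" "r = 0"
    by (simp_all add: zero_prod_def)
  then show ?thesis
    using \<open>u \<in> dm\<close> by (simp add: p_def r_def)
qed

lemma minus_adj_subset_swap:
  assumes dd: "densely_defined_op sc0 ip0 sc1 dm T" and closed: "closed_op ip0 ip1 dm T"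
    and TS: "minus_adj_subset ip0 ip1 dm T dmS S"
  shows "minus_adj_subset ip1 ip0 dmS S dm T"
  unfolding minus_adj_subset_def
proof (intro allI impI)
  fix v w assume vw: "\<forall>u\<in>dmS. ip0 (S u) v = ip1 u w"
  show "v \<in> dm \<and> T v = - w"
  proof (rule closed_op_adjoint_adjoint[OF dd closed], intro allI impI)
    fix r r' assume "\<forall>u\<in>dm. ip1 (T u) r = ip0 u r'"
    then have "r \<in> dmS" "S r = - r'"
      using TS unfolding minus_adj_subset_def by blast+
    then have "ip0 (- r') v = ip1 r w"
      using vw by metis
    then show "ip0 r' v = ip1 r (- w)"
      by (metis H0.ip_minus_left H1.ip_minus_right minus_minus)
  qed
qed

lemma BD_swap:
  assumes dd: "densely_defined_op sc0 ip0 sc1 dm T" and closed: "closed_op ip0 ip1 dm T"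
    and TS: "minus_adj_subset ip0 ip1 dm T dmS S" and ST: "minus_adj_subset ip1 ip0 dmS S dm T"
    and q: "q \<in> BD ip1 ip0 dmS S (adj_dom ip0 ip1 dm T)"
  shows "S q \<in> BD ip0 ip1 dm T (adj_dom ip1 ip0 dmS S) \<and> T (S q) = q"
proof -
  have "q \<in> dmS" and q_orth: "\<forall>v\<in>adj_dom ip0 ip1 dm T. ip1 q v + ip0 (S q) (S v) = 0"
    using q unfolding BD_def by auto
  have Sq: "S q \<in> dm \<and> T (S q) = q"
  proof (rule closed_op_adjoint_adjoint[OF dd closed], intro allI impI)
    fix r r' assume rr: "\<forall>u\<in>dm. ip1 (T u) r = ip0 u r'"
    then have "r \<in> adj_dom ip0 ip1 dm T"
      unfolding adj_dom_def by blast
    moreover have "S r = - r'"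
      using TS rr unfolding minus_adj_subset_def by blast
    ultimately have "ip1 q r = ip0 (S q) r'"
      using q_orth by (force simp: H0.ip_minus_right)
    then show "ip0 r' (S q) = ip1 r q"
      by (metis H0.ip_conj_sym H1.ip_conj_sym)
  qed
  have "ip0 (S q) v + ip1 (T (S q)) (T v) = 0" if v: "v \<in> adj_dom ip1 ip0 dmS S" for v
  proof -
    obtain w where w: "\<forall>u\<in>dmS. ip0 (S u) v = ip1 u w"
      using v unfolding adj_dom_def by blast
    then have "T v = - w"
      using ST unfolding minus_adj_subset_def by blast
    then show ?thesis
      using w \<open>q \<in> dmS\<close> Sq by (simp add: H1.ip_minus_right)
  qed
  then show ?thesis
    using Sq unfolding BD_def by blast
qed


lemma BD_mutually_inverse:
  assumes T: "densely_defined_op sc0 ip0 sc1 dm T" "closed_op ip0 ip1 dm T"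
    and S: "densely_defined_op sc1 ip1 sc0 dmS S" "closed_op ip1 ip0 dmS S"
    and TS: "minus_adj_subset ip0 ip1 dm T dmS S"
  shows "\<forall>q\<in>BD ip1 ip0 dmS S (adj_dom ip0 ip1 dm T).
           S q \<in> BD ip0 ip1 dm T (adj_dom ip1 ip0 dmS S) \<and> T (S q) = q"
    and "\<forall>u\<in>BD ip0 ip1 dm T (adj_dom ip1 ip0 dmS S).
           T u \<in> BD ip1 ip0 dmS S (adj_dom ip0 ip1 dm T) \<and> S (T u) = u"
proof -
  interpret swapped: hilbert_pair sc1 ip1 sc0 ip0
    by unfold_locales (fact complete1 complete0)+
  have ST: "minus_adj_subset ip1 ip0 dmS S dm T"
    using T TS by (rule minus_adj_subset_swap)
  show "\<forall>q\<in>BD ip1 ip0 dmS S (adj_dom ip0 ip1 dm T).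
          S q \<in> BD ip0 ip1 dm T (adj_dom ip1 ip0 dmS S) \<and> T (S q) = q"
    using BD_swap[OF T TS ST] by blast
  show "\<forall>u\<in>BD ip0 ip1 dm T (adj_dom ip1 ip0 dmS S).
          T u \<in> BD ip1 ip0 dmS S (adj_dom ip0 ip1 dm T) \<and> S (T u) = u"
    using swapped.BD_swap[OF S ST TS] by blast
qed

end

lemma hilbert_pair_if_hilbert_spaces:
  assumes "complex_hilbert_space sc0 ip0" "complex_hilbert_space sc1 ip1"
  shows "hilbert_pair sc0 ip0 sc1 ip1"
proof -
  interpret H0: complex_inner_product sc0 ip0
    using assms(1) complex_inner_product_if_inner_space unfolding complex_hilbert_space_def by blast
  interpret H1: complex_inner_product sc1 ip1
    using assms(2) complex_inner_product_if_inner_space unfolding complex_hilbert_space_def by blast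
  show ?thesis
    by unfold_locales
      (fact H0.complete_UNIV_if_hilbert[OF assms(1)] H1.complete_UNIV_if_hilbert[OF assms(2)])+
qed

theorem proposition2p8:
  fixes sc0 :: "complex \<Rightarrow> 'a::ab_group_add \<Rightarrow> 'a" and ip0 :: "'a \<Rightarrow> 'a \<Rightarrow> complex"
    and sc1 :: "complex \<Rightarrow> 'b::ab_group_add \<Rightarrow> 'b" and ip1 :: "'b \<Rightarrow> 'b \<Rightarrow> complex"
    and domG :: "'a set" and G :: "'a \<Rightarrow> 'b"
    and domD :: "'b set" and D :: "'b \<Rightarrow> 'a"
  assumes H0: "complex_hilbert_space sc0 ip0"
    and H1: "complex_hilbert_space sc1 ip1"
    and G_dd: "densely_defined_op sc0 ip0 sc1 domG G"
    and G_closed: "closed_op ip0 ip1 domG G"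
    and D_dd: "densely_defined_op sc1 ip1 sc0 domD D"
    and D_closed: "closed_op ip1 ip0 domD D"
    and ext: "\<forall>v \<in> adj_dom ip0 ip1 domG G. v \<in> domD \<and> D v = - adj ip0 ip1 domG G v"
  shows
    "let BG = BD ip0 ip1 domG G (adj_dom ip1 ip0 domD D);
         BDD = BD ip1 ip0 domD D (adj_dom ip0 ip1 domG G);
         NG = graph_norm ip0 ip1 G;
         ND = graph_norm ip1 ip0 D;
         \<Phi> = (\<lambda>q u. ip0 (D q) u + ip1 q (G u))
     in (\<forall>q\<in>BDD. \<Phi> q \<in> antidual BG sc0 NG) \<and>
        (\<forall>q\<in>BDD. \<forall>q'\<in>BDD. \<forall>u\<in>BG. \<Phi> (q + q') u = \<Phi> q u + \<Phi> q' u) \<and>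
        (\<forall>a. \<forall>q\<in>BDD. \<forall>u\<in>BG. \<Phi> (sc1 a q) u = a * \<Phi> q u) \<and>
        (\<forall>q\<in>BDD. dual_norm BG NG (\<Phi> q) = ND q) \<and>
        (\<forall>f\<in>antidual BG sc0 NG. \<exists>q\<in>BDD. \<forall>u\<in>BG. \<Phi> q u = f u)"
proof -
  interpret GD: hilbert_pair sc0 ip0 sc1 ip1
    using H0 H1 by (rule hilbert_pair_if_hilbert_spaces)
  define BG where "BG = BD ip0 ip1 domG G (adj_dom ip1 ip0 domD D)"
  define BDD where "BDD = BD ip1 ip0 domD D (adj_dom ip0 ip1 domG G)"
  have "minus_adj_subset ip0 ip1 domG G domD D"
    using G_dd ext by (rule GD.minus_adj_subset_if_adj)
  then have D_BD: "\<forall>q\<in>BDD. D q \<in> BG \<and> G (D q) = q" and G_BD: "\<forall>w\<in>BG. G w \<in> BDD \<and> D (G w) = w"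
    unfolding BG_def BDD_def using GD.BD_mutually_inverse[OF G_dd G_closed D_dd D_closed] by blast+
  have lin: "GD.linear_on BG G"
    unfolding BG_def by (rule GD.linear_on_BD[OF GD.linear_on_if_densely_defined[OF G_dd]])
  have Phi: "(\<lambda>u. ip0 (D q) u + ip1 q (G u)) = graph_ip ip0 ip1 G (D q)" if "q \<in> BDD" for q
    using D_BD that by (simp add: graph_ip_def fun_eq_iff)
  have D_add: "D (q + q') = D q + D q'" and D_scale: "D (sc1 a q) = sc0 a (D q)"
    if "q \<in> BDD" "q' \<in> BDD" for a q q'
    using D_dd that unfolding densely_defined_op_def BDD_def BD_def by auto
  have onto: "\<exists>q\<in>BDD. \<forall>u\<in>BG. ip0 (D q) u + ip1 q (G u) = f u"
    if "f \<in> antidual BG sc0 (graph_norm ip0 ip1 G)" for f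
    using GD.riesz_BD[OF G_dd G_closed that[unfolded BG_def]] G_BD
    unfolding BG_def[symmetric] by (metis graph_ip_def)
  show ?thesis
    unfolding Let_def BG_def[symmetric] BDD_def[symmetric]
    using GD.graph_ip_antidual[OF lin] GD.dual_norm_graph_ip[OF lin] D_BD Phi D_add D_scale onto
    by (simp add: graph_norm_def add.commute GD.H0.ip_add_left GD.H1.ip_add_left
        GD.H0.ip_scale_left GD.H1.ip_scale_left distrib_left)
qed

end
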